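(* Define $A_0:=1$ and, for integers $m\ge1$, $A_m:=\frac{1\cdot3\cdot5\cdots(2m-1)}{m!}=\frac{(2m)!}{2^m(m!)^2}$. For integers $m,n\ge0$ and $0\le r\le\min(m,n)$ set $$A_{m,n}^r:=\frac{A_{m-r}A_rA_{n-r}}{A_{n+m-r}}\cdot\frac{2n+2m-4r+1}{2n+2m-2r+1},\qquad B_{m,n}^r:=\frac{\sqrt{(2m+1)(2n+1)}}{2m+2n-4r+1}\,A_{m,n}^r .$$ Then there is a constant $C>0$ such that $B_{m,n}^r\le C$ for all integers $m,n\ge0$ and all $0\le r\le\min(m,n)$. *)

theory Defs
  imports Complex_Main
begin

definition A :: "nat \<Rightarrow> real" where
  "A m = fact (2*m) / (2^m * (fact m)^2)"

definition Amn :: "nat \<Rightarrow> nat \<Rightarrow> nat \<Rightarrow> real" where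
  "Amn m n r = (A (m - r) * A r * A (n - r) / A (n + m - r)) *
     ((2*real n + 2*real m - 4*real r + 1) / (2*real n + 2*real m - 2*real r + 1))"

definition Bmn :: "nat \<Rightarrow> nat \<Rightarrow> nat \<Rightarrow> real" where
  "Bmn m n r = sqrt ((2*real m + 1) * (2*real n + 1)) / (2*real m + 2*real n - 4*real r + 1) * Amn m n r"

end

theory Submission
  imports Defs
begin

text \<open>
  The normalised quantity \<open>W\<^sub>k = A\<^sub>k / 2\<^sup>k = (2k choose k) / 4\<^sup>k\<close> (the Wallis ratio) satisfies
  \<open>1/(4k+1) \<le> W\<^sub>k\<^sup>2 \<le> 1/(2k+1)\<close>, both by induction from \<open>W\<^sub>k\<^sub>+\<^sub>1 = W\<^sub>k (2k+1)/(2k+2)\<close>.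
  With \<open>m = a + r\<close>, \<open>n = b + r\<close> and \<open>N = a + b + r\<close> the powers of 2 cancel and
  \<open>B = \<surd>((2m+1)(2n+1)) W\<^sub>a W\<^sub>r W\<^sub>b / (W\<^sub>N (2N+1))\<close>. Inserting the bounds and
  \<open>2m+1 \<le> (2a+1)(2r+1)\<close>, \<open>2n+1 \<le> (2b+1)(2r+1)\<close> leaves
  \<open>B\<^sup>2 \<le> (2r+1)(4N+1)/(2N+1)\<^sup>2 \<le> 2\<close>.
\<close>

lemma A_Suc: "A (Suc k) = A k * (2 * real k + 1) / (real k + 1)"
proof -
  have "fact (2 * Suc k) = 2 * (real k + 1) * (2 * real k + 1) * fact (2 * k)"
    by (simp add: algebra_simps)
  moreover have "fact (Suc k) = (real k + 1) * fact k"
    by simp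
  moreover have "(fact k :: real) \<noteq> 0" "real k + 1 \<noteq> 0"
    by simp_all
  ultimately show ?thesis
    unfolding A_def by (simp add: divide_simps power2_eq_square) (simp add: algebra_simps)
qed

definition wallis :: "nat \<Rightarrow> real" where
  "wallis k = A k / 2 ^ k"

lemma wallis_pos: "wallis k > 0"
  unfolding wallis_def A_def by simp

lemma wallis_Suc: "wallis (Suc k) = wallis k * (2 * real k + 1) / (2 * real k + 2)"
  unfolding wallis_def A_Suc by (simp add: field_simps)

lemma wallis_Suc_sq: "wallis (Suc k) ^ 2 * (2 * real k + 2) ^ 2 = wallis k ^ 2 * (2 * real k + 1) ^ 2"
  unfolding wallis_Suc by (simp add: power_divide power_mult_distrib)

lemma wallis_sq_le: "wallis k ^ 2 * (2 * real k + 1) \<le> 1"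
proof (induction k)
  case 0
  then show ?case by (simp add: wallis_def A_def)
next
  case (Suc k)
  have "(2 * real k + 2) ^ 2 * (wallis (Suc k) ^ 2 * (2 * real (Suc k) + 1))
      = (wallis (Suc k) ^ 2 * (2 * real k + 2) ^ 2) * (2 * real k + 3)"
    by (simp add: algebra_simps)
  also have "\<dots> = (2 * real k + 1) * (2 * real k + 3) * (wallis k ^ 2 * (2 * real k + 1))"
    unfolding wallis_Suc_sq by (simp add: algebra_simps power2_eq_square)
  also have "\<dots> \<le> (2 * real k + 1) * (2 * real k + 3) * 1"
    using mult_left_mono[OF Suc.IH, of "(2 * real k + 1) * (2 * real k + 3)"] by simp
  also have "\<dots> \<le> (2 * real k + 2) ^ 2 * 1"
    by (simp add: power2_eq_square algebra_simps)
  finally show ?case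
    by (rule mult_left_le_imp_le) simp
qed

lemma wallis_sq_ge: "1 \<le> wallis k ^ 2 * (4 * real k + 1)"
proof (induction k)
  case 0
  then show ?case by (simp add: wallis_def A_def)
next
  case (Suc k)
  have "(2 * real k + 2) ^ 2 * (4 * real k + 1) * 1 \<le> (2 * real k + 1) ^ 2 * (4 * real k + 5)"
    by (simp add: power2_eq_square algebra_simps)
  also have "\<dots> \<le> (2 * real k + 1) ^ 2 * (4 * real k + 5) * (wallis k ^ 2 * (4 * real k + 1))"
    using mult_left_mono[OF Suc.IH, of "(2 * real k + 1) ^ 2 * (4 * real k + 5)"] by simp
  also have "\<dots> = (wallis (Suc k) ^ 2 * (2 * real k + 2) ^ 2) * (4 * real k + 5) * (4 * real k + 1)"
    unfolding wallis_Suc_sq by (simp add: algebra_simps)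
  also have "\<dots> = (2 * real k + 2) ^ 2 * (4 * real k + 1) * (wallis (Suc k) ^ 2 * (4 * real (Suc k) + 1))"
    by (simp add: algebra_simps)
  finally show ?case
    by (rule mult_left_le_imp_le) simp
qed

lemma Bmn_eq_wallis:
  fixes a b r :: nat
  defines "N \<equiv> a + b + r"
  shows "Bmn (a + r) (b + r) r = sqrt ((2 * real (a + r) + 1) * (2 * real (b + r) + 1))
      * (wallis a * wallis r * wallis b / (wallis N * (2 * real N + 1)))"
proof -
  have index: "b + r + (a + r) - r = N" "a + r - r = a" "b + r - r = b"
    unfolding N_def by simp_all
  have ratio: "A a * A r * A b / A N = wallis a * wallis r * wallis b / wallis N"
    using wallis_pos[of N] unfolding wallis_def N_def by (simp add: power_add field_simps)
  have denom:
    "2 * real (a + r) + 2 * real (b + r) - 4 * real r + 1 = 2 * real a + 2 * real b + 1"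
    "2 * real (b + r) + 2 * real (a + r) - 4 * real r + 1 = 2 * real a + 2 * real b + 1"
    "2 * real (b + r) + 2 * real (a + r) - 2 * real r + 1 = 2 * real N + 1"
    unfolding N_def by simp_all
  have "2 * real a + 2 * real b + 1 \<noteq> 0"
    by simp
  then show ?thesis
    unfolding Bmn_def Amn_def index ratio denom by simp
qed

lemma Bmn_sq_le_2: "Bmn (a + r) (b + r) r ^ 2 \<le> 2"
proof -
  define N where "N = a + b + r"
  define m n where "m = 2 * real (a + r) + 1" and "n = 2 * real (b + r) + 1"
  define \<alpha> \<beta> \<rho> where "\<alpha> = 2 * real a + 1" and "\<beta> = 2 * real b + 1" and "\<rho> = 2 * real r + 1"
  define \<mu> \<nu> where "\<mu> = 4 * real N + 1" and "\<nu> = 2 * real N + 1"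
  have pos: "wallis N > 0" "\<alpha> > 0" "\<beta> > 0" "\<rho> > 0" "\<mu> > 0" "\<nu> > 0"
    using wallis_pos unfolding \<alpha>_def \<beta>_def \<rho>_def \<mu>_def \<nu>_def by simp_all
  have "Bmn (a + r) (b + r) r ^ 2 = m * n * (wallis a * wallis r * wallis b) ^ 2 / (wallis N * \<nu>) ^ 2"
    unfolding Bmn_eq_wallis m_def n_def N_def \<nu>_def by (simp add: power_mult_distrib power_divide)
  also have "\<dots> = (m / (\<alpha> * \<rho>)) * (n / (\<beta> * \<rho>))
    * (wallis a ^ 2 * \<alpha>) * (wallis r ^ 2 * \<rho>) * (wallis b ^ 2 * \<beta>)
    * (1 / (wallis N ^ 2 * \<mu>)) * (\<rho> * \<mu> / \<nu> ^ 2)"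
    using pos by (simp add: field_simps power2_eq_square)
  also have "\<dots> \<le> 1 * 1 * 1 * 1 * 1 * 1 * 2"
  proof -
    have "m \<le> \<alpha> * \<rho>" "n \<le> \<beta> * \<rho>" "\<rho> * \<mu> \<le> 2 * \<nu> ^ 2"
      unfolding m_def n_def \<alpha>_def \<beta>_def \<rho>_def \<mu>_def \<nu>_def N_def
      by (simp_all add: power2_eq_square algebra_simps)
    then show ?thesis
      using pos wallis_sq_le[of a] wallis_sq_le[of r] wallis_sq_le[of b] wallis_sq_ge[of N]
      unfolding \<alpha>_def \<beta>_def \<rho>_def \<mu>_def
      by (intro mult_mono) (simp_all add: divide_le_eq m_def n_def)
  qed
  finally show ?thesis
    by simp
qed

theorem mainTheorem1:
  shows "\<exists>C::real. C > 0 \<and> (\<forall>m n r::nat. r \<le> min m n \<longrightarrow> Bmn m n r \<le> C)"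
proof (intro exI[of _ "sqrt 2"] conjI allI impI)
  fix m n r :: nat
  assume "r \<le> min m n"
  then obtain a b where "m = a + r" "n = b + r"
    by (metis add.commute le_add_diff_inverse min.bounded_iff)
  then show "Bmn m n r \<le> sqrt 2"
    using Bmn_sq_le_2 by (simp add: real_le_rsqrt)
qed simp

end
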